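(* Let $(X,d,f)$ be a dynamical system and $\mathcal{A}=\{\mathcal{U}_n\}_{n\in\mathbb{N}}$ a complete defining sequence of $(X,d)$. (i) $(X,d,f)$ is topologically conjugate to the inverse limit of $(\hookrightarrow,(\mathcal{O}(\mathcal{U}_n),\sigma_n))$ equipped with the map $\sigma^*=(\sigma_n)^*$. (ii) If in addition $\mathcal{A}$ is tame and $f$ is uniformly continuous, then the conjugacy can be made uniform (the conjugating homeomorphism and its inverse are uniformly continuous).
   Context: Spaces are nonempty separable metrizable; a dynamical system $(X,d,f)$ has admissible metric $d$ and continuous $f$. A partition is a cover by pairwise disjoint nonempty clopen sets. A defining sequence is a sequence $\{\mathcal{U}_n\}$ of partitions, each refining the previous, whose union is a basis; complete if nested sequences $U_n\in\mathcal{U}_n$ have nonempty intersection; tame if $\sup\{\operatorname{diam}O:O\in\mathcal{U}_n\}\to0$ and each $\mathcal{U}_n$ is $\rho_n$-separated for some $\rho_n>0$. For a partition $\mathcal{U}$ (discrete metric), $\mathcal{O}(\mathcal{U})=\{(O_i)_{i\in\mathbb{N}}\in\mathcal{U}^{\mathbb{N}}: \forall k\ \exists x\in X \text{ with } f^i(x)\in O_i \text{ for } 0\le i\le k\}$, a shift space over the alphabet $\mathcal{U}$ with shift map $\sigma_n$ and metric $1/(i+1)$ ($i$ least index of disagreement). The bonding map $\hookrightarrow:\mathcal{O}(\mathcal{U}_{n+1})\to\mathcal{O}(\mathcal{U}_n)$ sends $(O_i)$ to the unique $(V_i)\in\mathcal{U}_n^{\mathbb{N}}$ with $O_i\subseteq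 V_i$. The inverse limit is $\{(y_n)\in\prod_n\mathcal{O}(\mathcal{U}_n): y_n=\hookrightarrow(y_{n+1})\}$ with metric $d_\Pi((y_n),(z_n))=\max_n d(y_n,z_n)/(n+1)$, and $\sigma^*$ is the restriction of $\prod_n\sigma_n$. *)

theory Defs
  imports "HOL-Analysis.Analysis"
begin

definition is_partition :: "'a set \<Rightarrow> ('a \<Rightarrow> 'a \<Rightarrow> real) \<Rightarrow> 'a set set \<Rightarrow> bool" where
  "is_partition X d P \<longleftrightarrow>
     \<Union>P = X \<and>
     (\<forall>A\<in>P. A \<noteq> {} \<and> openin (Metric_space.mtopology X d) A
                     \<and> closedin (Metric_space.mtopology X d) A) \<and>
     (\<forall>A\<in>P. \<forall>B\<in>P. A \<noteq> B \<longrightarrow> A \<inter> B = {})"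

definition defining_sequence :: "'a set \<Rightarrow> ('a \<Rightarrow> 'a \<Rightarrow> real) \<Rightarrow> (nat \<Rightarrow> 'a set set) \<Rightarrow> bool" where
  "defining_sequence X d U \<longleftrightarrow>
     (\<forall>n. is_partition X d (U n)) \<and>
     (\<forall>n. \<forall>A\<in>U (Suc n). \<exists>B\<in>U n. A \<subseteq> B) \<and>
     (\<forall>S x. openin (Metric_space.mtopology X d) S \<and> x \<in> S \<longrightarrow>
            (\<exists>B\<in>(\<Union>n. U n). x \<in> B \<and> B \<subseteq> S))"

definition complete_defseq :: "'a set \<Rightarrow> ('a \<Rightarrow> 'a \<Rightarrow> real) \<Rightarrow> (nat \<Rightarrow> 'a set set) \<Rightarrow> bool" where
  "complete_defseq X d U \<longleftrightarrow>
     defining_sequence X d U \<and>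
     (\<forall>V. (\<forall>n. V n \<in> U n) \<and> (\<forall>n. V (Suc n) \<subseteq> V n) \<longrightarrow> (\<Inter>n. V n) \<noteq> {})"

text \<open>Diameter of a set, as an extended real (so that unbounded sets have diameter \<infinity>).\<close>
definition set_diam :: "('a \<Rightarrow> 'a \<Rightarrow> real) \<Rightarrow> 'a set \<Rightarrow> ereal" where
  "set_diam d A = (SUP p\<in>A \<times> A. ereal (d (fst p) (snd p)))"

definition tame_defseq :: "'a set \<Rightarrow> ('a \<Rightarrow> 'a \<Rightarrow> real) \<Rightarrow> (nat \<Rightarrow> 'a set set) \<Rightarrow> bool" where
  "tame_defseq X d U \<longleftrightarrow>
     defining_sequence X d U \<and>
     ((\<lambda>n. SUP A\<in>U n. set_diam d A) \<longlonglongrightarrow> 0) \<and>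
     (\<forall>n. \<exists>\<rho>>0. \<forall>A\<in>U n. \<forall>B\<in>U n. A \<noteq> B \<longrightarrow> (\<forall>x\<in>A. \<forall>y\<in>B. \<rho> \<le> d x y))"

definition orbit_space :: "'a set \<Rightarrow> ('a \<Rightarrow> 'a) \<Rightarrow> 'a set set \<Rightarrow> (nat \<Rightarrow> 'a set) set" where
  "orbit_space X f P =
     {s. (\<forall>i. s i \<in> P) \<and> (\<forall>k. \<exists>x\<in>X. \<forall>i\<le>k. (f ^^ i) x \<in> s i)}"

definition shift :: "(nat \<Rightarrow> 'b) \<Rightarrow> (nat \<Rightarrow> 'b)" where
  "shift s = (\<lambda>i. s (Suc i))"

definition seq_dist :: "(nat \<Rightarrow> 'b) \<Rightarrow> (nat \<Rightarrow> 'b) \<Rightarrow> real" where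
  "seq_dist s t = (if s = t then 0 else 1 / real (Suc (LEAST i. s i \<noteq> t i)))"

definition bond :: "'a set set \<Rightarrow> (nat \<Rightarrow> 'a set) \<Rightarrow> (nat \<Rightarrow> 'a set)" where
  "bond P s = (\<lambda>i. THE V. V \<in> P \<and> s i \<subseteq> V)"

definition inv_limit :: "'a set \<Rightarrow> ('a \<Rightarrow> 'a) \<Rightarrow> (nat \<Rightarrow> 'a set set) \<Rightarrow> (nat \<Rightarrow> nat \<Rightarrow> 'a set) set" where
  "inv_limit X f U =
     {y. (\<forall>n. y n \<in> orbit_space X f (U n)) \<and> (\<forall>n. y n = bond (U n) (y (Suc n)))}"

definition inv_limit_dist :: "(nat \<Rightarrow> nat \<Rightarrow> 'a set) \<Rightarrow> (nat \<Rightarrow> nat \<Rightarrow> 'a set) \<Rightarrow> real" where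
  "inv_limit_dist y z = (SUP n. seq_dist (y n) (z n) / real (Suc n))"

definition sigma_star :: "(nat \<Rightarrow> nat \<Rightarrow> 'a set) \<Rightarrow> (nat \<Rightarrow> nat \<Rightarrow> 'a set)" where
  "sigma_star y = (\<lambda>n. shift (y n))"

end

theory Submission
  imports Defs
begin

text \<open>
  A point x is coded by its itinerary, the family of cells of U_n containing f^i x; shifting the
  itinerary is the same as applying f. Since the cells are open and form a basis, the coding is
  continuous and injective. Completeness of the defining sequence says that every compatible family
  of itineraries is realised by a point of the nested intersection of its initial cells, which gives
  the continuous inverse. Under tameness, the separation of U_N together with uniform continuity of
  the iterates f^0, ..., f^N makes the coding uniformly continuous, and the vanishing mesh of U_n
  does the same for its inverse.
\<close>

section \<open>The metric of the inverse limit\<close>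

lemma seq_dist_nonneg: "0 \<le> seq_dist s t"
  by (simp add: seq_dist_def)

lemma seq_dist_le_1: "seq_dist s t \<le> 1"
  by (simp add: seq_dist_def divide_le_eq)

lemma seq_dist_sym: "seq_dist s t = seq_dist t s"
  unfolding seq_dist_def by (simp add: eq_commute)

lemma seq_dist_eq_0_iff: "seq_dist s t = 0 \<longleftrightarrow> s = t"
  by (simp add: seq_dist_def)

lemma seq_dist_le_if_agree:
  assumes "\<forall>i\<le>N. s i = t i"
  shows "seq_dist s t \<le> 1 / real (N + 2)"
proof (cases "s = t")
  case False
  then obtain j where "s j \<noteq> t j"
    by auto
  then have "s (LEAST i. s i \<noteq> t i) \<noteq> t (LEAST i. s i \<noteq> t i)"
    by (rule LeastI)
  then have "N < (LEAST i. s i \<noteq> t i)"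
    using assms by (meson not_le)
  then show ?thesis
    using False by (simp add: seq_dist_def frac_le)
qed (simp add: seq_dist_def)

lemma seq_dist_eq_1_if_head_differs:
  assumes "s 0 \<noteq> t 0"
  shows "seq_dist s t = 1"
proof -
  have "(LEAST i. s i \<noteq> t i) = 0"
    using assms by (rule Least_eq_0)
  with assms show ?thesis
    by (auto simp: seq_dist_def)
qed

lemma seq_dist_ultrametric: "seq_dist s u \<le> max (seq_dist s t) (seq_dist t u)"
proof (cases "s = t \<or> t = u \<or> s = u")
  case True
  then show ?thesis
    using seq_dist_nonneg[of s t] seq_dist_eq_0_iff[of s s] by (auto simp: le_max_iff_disj)
next
  case False
  define a b c where "a = (LEAST i. s i \<noteq> t i)" and "b = (LEAST i. t i \<noteq> u i)"
    and "c = (LEAST i. s i \<noteq> u i)"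
  obtain j where "s j \<noteq> u j"
    using False by auto
  then have "s c \<noteq> u c"
    unfolding c_def by (rule LeastI)
  have "min a b \<le> c"
  proof (rule ccontr)
    assume "\<not> min a b \<le> c"
    then have "c < a" "c < b"
      by auto
    then have "s c = t c" "t c = u c"
      unfolding a_def b_def by (blast dest: not_less_Least)+
    with \<open>s c \<noteq> u c\<close> show False by simp
  qed
  moreover have "1 / real (Suc l) \<le> 1 / real (Suc k)" if "k \<le> l" for k l
    using that by (intro frac_le) auto
  ultimately have "1 / real (Suc c) \<le> max (1 / real (Suc a)) (1 / real (Suc b))"
    by (auto simp: le_max_iff_disj min_le_iff_disj)
  then show ?thesis
    using False by (simp add: seq_dist_def a_def b_def c_def)
qed

lemma seq_dist_triangle: "seq_dist s u \<le> seq_dist s t + seq_dist t u"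
  using seq_dist_ultrametric[of s u t] seq_dist_nonneg[of s t] seq_dist_nonneg[of t u]
  by linarith

lemma bdd_above_inv_limit_dist_terms:
  "bdd_above (range (\<lambda>n. seq_dist (y n) (z n) / real (Suc n)))"
proof (rule bdd_aboveI2)
  fix n
  show "seq_dist (y n) (z n) / real (Suc n) \<le> 1"
    using seq_dist_le_1[of "y n" "z n"] seq_dist_nonneg[of "y n" "z n"]
    by (simp add: divide_le_eq)
qed

lemma inv_limit_dist_ge_term: "seq_dist (y n) (z n) / real (Suc n) \<le> inv_limit_dist y z"
  unfolding inv_limit_dist_def by (rule cSUP_upper[OF _ bdd_above_inv_limit_dist_terms]) simp

lemma inv_limit_dist_eq_0_iff: "inv_limit_dist y z = 0 \<longleftrightarrow> y = z"
proof
  assume "inv_limit_dist y z = 0"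
  then have "y n = z n" for n
    using inv_limit_dist_ge_term[of y n z] seq_dist_nonneg[of "y n" "z n"]
    by (simp add: divide_le_0_iff flip: seq_dist_eq_0_iff)
  then show "y = z" by auto
qed (simp add: inv_limit_dist_def seq_dist_def)

lemma inv_limit_dist_triangle: "inv_limit_dist y w \<le> inv_limit_dist y z + inv_limit_dist z w"
  unfolding inv_limit_dist_def[of y w]
proof (rule cSUP_least)
  fix n
  have "seq_dist (y n) (w n) / real (Suc n)
      \<le> seq_dist (y n) (z n) / real (Suc n) + seq_dist (z n) (w n) / real (Suc n)"
    using seq_dist_triangle[of "y n" "w n" "z n"]
    by (simp add: divide_right_mono flip: add_divide_distrib)
  also have "\<dots> \<le> inv_limit_dist y z + inv_limit_dist z w"
    using inv_limit_dist_ge_term[of y n z] inv_limit_dist_ge_term[of z n w] by simp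
  finally show "seq_dist (y n) (w n) / real (Suc n) \<le> inv_limit_dist y z + inv_limit_dist z w" .
qed simp

lemma Metric_space_inv_limit_dist: "Metric_space S inv_limit_dist"
proof
  fix y z w
  show "0 \<le> inv_limit_dist y z"
    using inv_limit_dist_ge_term[of y 0 z] seq_dist_nonneg[of "y 0" "z 0"] by simp
  show "inv_limit_dist y z = inv_limit_dist z y"
    unfolding inv_limit_dist_def by (simp add: seq_dist_sym)
  show "inv_limit_dist y z = 0 \<longleftrightarrow> y = z"
    by (rule inv_limit_dist_eq_0_iff)
  show "inv_limit_dist y w \<le> inv_limit_dist y z + inv_limit_dist z w"
    by (rule inv_limit_dist_triangle)
qed

lemma inv_limit_dist_less_if_agree:
  assumes "\<forall>n\<le>N. \<forall>i\<le>N. y n i = z n i"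
  shows "inv_limit_dist y z < inverse (real (Suc N))"
proof -
  have "inv_limit_dist y z \<le> 1 / real (N + 2)"
    unfolding inv_limit_dist_def
  proof (rule cSUP_least)
    fix n
    show "seq_dist (y n) (z n) / real (Suc n) \<le> 1 / real (N + 2)"
    proof (cases "n \<le> N")
      case True
      then have "seq_dist (y n) (z n) \<le> 1 / real (N + 2)"
        using assms seq_dist_le_if_agree[of N "y n" "z n"] by auto
      moreover have "seq_dist (y n) (z n) / real (Suc n) \<le> seq_dist (y n) (z n)"
        using seq_dist_nonneg[of "y n" "z n"] by (simp add: divide_le_eq mult_le_cancel_left1)
      ultimately show ?thesis by linarith
    next
      case False
      have "seq_dist (y n) (z n) / real (Suc n) \<le> 1 / real (Suc n)"
        using seq_dist_le_1[of "y n" "z n"] by (intro divide_right_mono) auto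
      also have "\<dots> \<le> 1 / real (N + 2)"
        using False by (simp add: frac_le)
      finally show ?thesis .
    qed
  qed simp
  also have "\<dots> < inverse (real (Suc N))"
    by (simp add: inverse_eq_divide frac_less2)
  finally show ?thesis .
qed

lemma inv_limit_dist_less_imp_head_eq:
  assumes "inv_limit_dist y z < inverse (real (Suc m))"
  shows "y m 0 = z m 0"
  using assms inv_limit_dist_ge_term[of y m z] seq_dist_eq_1_if_head_differs[of "y m" "z m"]
  by (fastforce simp: inverse_eq_divide)

lemma continuous_map_funpow:
  "continuous_map T T f \<Longrightarrow> continuous_map T T (f ^^ n)"
  by (induction n) (auto simp: funpow_Suc_right intro: continuous_map_compose)

lemma uniformly_continuous_map_funpow:
  "uniformly_continuous_map m m f \<Longrightarrow> uniformly_continuous_map m m (f ^^ n)"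
  by (induction n) (auto simp: funpow_Suc_right id_def intro: uniformly_continuous_map_compose)

lemma uniformly_continuous_map_finite_family:
  assumes "finite I" and "\<And>i. i \<in> I \<Longrightarrow> uniformly_continuous_map m1 m2 (g i)" and "\<epsilon> > 0"
  shows "\<exists>\<delta>>0. \<forall>x\<in>mspace m1. \<forall>y\<in>mspace m1.
           mdist m1 y x < \<delta> \<longrightarrow> (\<forall>i\<in>I. mdist m2 (g i y) (g i x) < \<epsilon>)"
  using assms(1,2)
proof (induction I rule: finite_induct)
  case empty
  show ?case by (intro exI[of _ 1]) simp
next
  case (insert j I)
  have "\<exists>\<delta>>0. \<forall>x\<in>mspace m1. \<forall>y\<in>mspace m1.
      mdist m1 y x < \<delta> \<longrightarrow> (\<forall>i\<in>I. mdist m2 (g i y) (g i x) < \<epsilon>)"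
    by (rule insert.IH) (simp add: insert.prems)
  then obtain \<delta>1 where "\<delta>1 > 0"
    and \<delta>1: "\<forall>x\<in>mspace m1. \<forall>y\<in>mspace m1. mdist m1 y x < \<delta>1 \<longrightarrow> (\<forall>i\<in>I. mdist m2 (g i y) (g i x) < \<epsilon>)"
    by blast
  obtain \<delta>2 where "\<delta>2 > 0"
    and \<delta>2: "\<forall>x\<in>mspace m1. \<forall>y\<in>mspace m1. mdist m1 y x < \<delta>2 \<longrightarrow> mdist m2 (g j y) (g j x) < \<epsilon>"
    using insert.prems \<open>\<epsilon> > 0\<close> unfolding uniformly_continuous_map_def by blast
  show ?case
    using \<open>\<delta>1 > 0\<close> \<open>\<delta>2 > 0\<close> \<delta>1 \<delta>2 by (intro exI[of _ "min \<delta>1 \<delta>2"]) auto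
qed

section \<open>Itineraries\<close>

definition cell :: "'a set set \<Rightarrow> 'a \<Rightarrow> 'a set" where
  "cell P x = (THE V. V \<in> P \<and> x \<in> V)"

lemma partition_cell_eq:
  assumes "is_partition X d P" "A \<in> P" "x \<in> A"
  shows "cell P x = A"
  unfolding cell_def
proof (rule the_equality)
  fix V assume "V \<in> P \<and> x \<in> V"
  then show "V = A"
    using assms unfolding is_partition_def by blast
qed (use assms in simp)

lemma
  assumes "is_partition X d P" "x \<in> X"
  shows cell_in_partition: "cell P x \<in> P" and mem_cell: "x \<in> cell P x"
proof -
  obtain A where "A \<in> P" "x \<in> A"
    using assms unfolding is_partition_def by blast
  with partition_cell_eq[OF assms(1) this] show "cell P x \<in> P" "x \<in> cell P x"
    by simp_all
qed

lemma bond_eq: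
  assumes "is_partition X d P" "B \<in> P" "s i \<subseteq> B" "s i \<noteq> {}"
  shows "bond P s i = B"
  unfolding bond_def
proof (rule the_equality)
  fix V assume "V \<in> P \<and> s i \<subseteq> V"
  then show "V = B"
    using assms unfolding is_partition_def by blast
qed (use assms in simp)

locale defseq_system = Metric_space X d for X :: "'a set" and d +
  fixes f :: "'a \<Rightarrow> 'a" and U :: "nat \<Rightarrow> 'a set set"
  assumes continuous_f: "continuous_map mtopology mtopology f"
    and defining_sequence_U: "defining_sequence X d U"
begin

lemma partition_U: "is_partition X d (U n)"
  using defining_sequence_U by (simp add: defining_sequence_def)

lemma refines_U: "A \<in> U (Suc n) \<Longrightarrow> \<exists>B\<in>U n. A \<subseteq> B"
  using defining_sequence_U by (simp add: defining_sequence_def)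

lemma U_subset: "A \<in> U n \<Longrightarrow> A \<subseteq> X"
  using partition_U[of n] unfolding is_partition_def by blast

lemma U_nonempty: "A \<in> U n \<Longrightarrow> A \<noteq> {}"
  using partition_U[of n] unfolding is_partition_def by blast

lemma U_openin: "A \<in> U n \<Longrightarrow> openin mtopology A"
  using partition_U[of n] unfolding is_partition_def by blast

lemma cell_subset_openin:
  assumes "openin mtopology S" "x \<in> S"
  shows "\<exists>n. cell (U n) x \<subseteq> S"
proof -
  obtain n B where B: "B \<in> U n" "x \<in> B" "B \<subseteq> S"
    using defining_sequence_U assms unfolding defining_sequence_def by blast
  then have "cell (U n) x = B"
    using partition_cell_eq[OF partition_U B(1,2)] by simp
  with \<open>B \<subseteq> S\<close> show ?thesis
    by blast
qed

lemma cell_antimono: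
  assumes "x \<in> X" "n \<le> m"
  shows "cell (U m) x \<subseteq> cell (U n) x"
  using assms(2)
proof (induction m rule: dec_induct)
  case (step m)
  obtain B where "B \<in> U m" "cell (U (Suc m)) x \<subseteq> B"
    using refines_U[OF cell_in_partition[OF partition_U assms(1)]] by blast
  moreover have "x \<in> B"
    using calculation mem_cell[OF partition_U assms(1)] by blast
  ultimately have "cell (U (Suc m)) x \<subseteq> cell (U m) x"
    using partition_cell_eq[OF partition_U] by simp
  then show ?case
    using step.IH by blast
qed simp

lemma cell_eq_if_finer_cell_eq:
  assumes "x \<in> X" "z \<in> X" "n \<le> N" "cell (U N) x = cell (U N) z"
  shows "cell (U n) x = cell (U n) z"
proof -
  have "x \<in> cell (U N) z"
    using mem_cell[OF partition_U[of N] assms(1)] assms(4) by simp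
  then have "x \<in> cell (U n) z"
    using cell_antimono[OF assms(2,3)] by blast
  then show ?thesis
    by (rule partition_cell_eq[OF partition_U cell_in_partition[OF partition_U assms(2)]])
qed

lemma funpow_in: "x \<in> X \<Longrightarrow> (f ^^ i) x \<in> X"
  using continuous_map_image_subset_topspace[OF continuous_map_funpow[OF continuous_f]] by auto

definition itinerary :: "'a \<Rightarrow> nat \<Rightarrow> nat \<Rightarrow> 'a set" where
  "itinerary x = (\<lambda>n i. cell (U n) ((f ^^ i) x))"

lemma itinerary_in_inv_limit:
  assumes "x \<in> X"
  shows "itinerary x \<in> inv_limit X f U"
proof -
  have "itinerary x n \<in> orbit_space X f (U n)" for n
    unfolding orbit_space_def itinerary_def using assms
    by (auto intro!: bexI[of _ x] cell_in_partition[OF partition_U] mem_cell[OF partition_U] funpow_in)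
  moreover have "bond (U n) (itinerary x (Suc n)) i = itinerary x n i" for n i
  proof -
    have fx: "(f ^^ i) x \<in> X"
      using assms by (rule funpow_in)
    have "bond (U n) (\<lambda>i. cell (U (Suc n)) ((f ^^ i) x)) i = cell (U n) ((f ^^ i) x)"
    proof (rule bond_eq[OF partition_U])
      show "cell (U n) ((f ^^ i) x) \<in> U n"
        by (rule cell_in_partition[OF partition_U fx])
      show "cell (U (Suc n)) ((f ^^ i) x) \<subseteq> cell (U n) ((f ^^ i) x)"
        by (rule cell_antimono[OF fx]) simp
      show "cell (U (Suc n)) ((f ^^ i) x) \<noteq> {}"
        using mem_cell[OF partition_U fx] by blast
    qed
    then show ?thesis
      unfolding itinerary_def .
  qed
  ultimately show ?thesis
    unfolding inv_limit_def by (simp add: fun_eq_iff)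
qed

lemma itinerary_f: "itinerary (f x) = sigma_star (itinerary x)"
  unfolding itinerary_def sigma_star_def shift_def by (simp add: funpow_swap1)

lemma inv_limit_dist_itinerary_less:
  assumes "x \<in> X" "z \<in> X" "\<forall>i\<le>N. cell (U N) ((f ^^ i) x) = cell (U N) ((f ^^ i) z)"
  shows "inv_limit_dist (itinerary x) (itinerary z) < inverse (real (Suc N))"
proof (intro inv_limit_dist_less_if_agree allI impI)
  fix n i
  assume "n \<le> N" "i \<le> N"
  then show "itinerary x n i = itinerary z n i"
    unfolding itinerary_def using assms
    by (intro cell_eq_if_finer_cell_eq[OF funpow_in funpow_in \<open>n \<le> N\<close>]) simp_all
qed

lemma continuous_map_itinerary:
  "continuous_map mtopology (Metric_space.mtopology (inv_limit X f U) inv_limit_dist) itinerary"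
  unfolding metric_continuous_map[OF Metric_space_inv_limit_dist]
proof (intro conjI ballI allI impI)
  show "itinerary ` X \<subseteq> inv_limit X f U"
    using itinerary_in_inv_limit by auto
next
  fix a and \<epsilon> :: real
  assume "a \<in> X" "\<epsilon> > 0"
  from reals_Archimedean[OF \<open>\<epsilon> > 0\<close>] obtain N where N: "inverse (real (Suc N)) < \<epsilon>" ..
  define S where "S = (\<Inter>i\<le>N. {z \<in> topspace mtopology. (f ^^ i) z \<in> cell (U N) ((f ^^ i) a)})"
  have "openin mtopology S"
    unfolding S_def
  proof (rule openin_INT2)
    fix i
    show "openin mtopology {z \<in> topspace mtopology. (f ^^ i) z \<in> cell (U N) ((f ^^ i) a)}"
      using U_openin[OF cell_in_partition[OF partition_U funpow_in[OF \<open>a \<in> X\<close>]]]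
      by (rule openin_continuous_map_preimage[OF continuous_map_funpow[OF continuous_f]])
  qed auto
  moreover have "a \<in> S"
    unfolding S_def using \<open>a \<in> X\<close> by (auto intro: mem_cell[OF partition_U] funpow_in)
  ultimately obtain r where "r > 0" "mball a r \<subseteq> S"
    using openin_mtopology by blast
  moreover have "inv_limit_dist (itinerary a) (itinerary x) < \<epsilon>" if "x \<in> S" for x
  proof -
    have "x \<in> X"
      using that unfolding S_def by auto
    have "\<forall>i\<le>N. cell (U N) ((f ^^ i) a) = cell (U N) ((f ^^ i) x)"
      using \<open>x \<in> S\<close> unfolding S_def
      by (auto intro!: partition_cell_eq[OF partition_U cell_in_partition[OF partition_U funpow_in[OF \<open>a \<in> X\<close>]],
          symmetric])
    with \<open>x \<in> X\<close> have "inv_limit_dist (itinerary a) (itinerary x) < inverse (real (Suc N))"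
      by (rule inv_limit_dist_itinerary_less[OF \<open>a \<in> X\<close>])
    with N show ?thesis
      by linarith
  qed
  ultimately show "\<exists>\<delta>>0. \<forall>x. x \<in> X \<and> d a x < \<delta> \<longrightarrow> inv_limit_dist (itinerary a) (itinerary x) < \<epsilon>"
    using \<open>a \<in> X\<close> by (intro exI[of _ r]) (auto simp: subset_iff)
qed

lemma uniformly_continuous_map_itinerary:
  assumes "uniformly_continuous_map (metric (X, d)) (metric (X, d)) f"
    and "\<And>n. \<exists>\<rho>>0. \<forall>A\<in>U n. \<forall>B\<in>U n. A \<noteq> B \<longrightarrow> (\<forall>x\<in>A. \<forall>y\<in>B. \<rho> \<le> d x y)"
  shows "uniformly_continuous_map (metric (X, d)) (metric (inv_limit X f U, inv_limit_dist)) itinerary"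
  unfolding uniformly_continuous_map_def Metric_space.mspace_metric[OF Metric_space_inv_limit_dist]
    Metric_space.mdist_metric[OF Metric_space_inv_limit_dist] mspace_metric mdist_metric
proof (intro conjI allI impI)
  show "itinerary \<in> X \<rightarrow> inv_limit X f U"
    using itinerary_in_inv_limit by auto
next
  fix \<epsilon> :: real
  assume "\<epsilon> > 0"
  from reals_Archimedean[OF \<open>\<epsilon> > 0\<close>] obtain N where N: "inverse (real (Suc N)) < \<epsilon>" ..
  obtain \<rho> where "\<rho> > 0" and \<rho>: "\<forall>A\<in>U N. \<forall>B\<in>U N. A \<noteq> B \<longrightarrow> (\<forall>x\<in>A. \<forall>y\<in>B. \<rho> \<le> d x y)"
    using assms(2)[of N] by auto
  have "\<exists>\<delta>>0. \<forall>x\<in>X. \<forall>y\<in>X. d y x < \<delta> \<longrightarrow> (\<forall>i\<in>{..N}. d ((f ^^ i) y) ((f ^^ i) x) < \<rho>)"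
    using uniformly_continuous_map_finite_family[of "{..N}" "metric (X, d)" "metric (X, d)"
        "\<lambda>i. f ^^ i", OF _ uniformly_continuous_map_funpow[OF assms(1)] \<open>\<rho> > 0\<close>]
    by simp
  then obtain \<delta> where "\<delta> > 0"
    and \<delta>: "\<forall>x\<in>X. \<forall>y\<in>X. d y x < \<delta> \<longrightarrow> (\<forall>i\<in>{..N}. d ((f ^^ i) y) ((f ^^ i) x) < \<rho>)"
    by blast
  have "inv_limit_dist (itinerary y) (itinerary x) < \<epsilon>" if "x \<in> X" "y \<in> X" "d y x < \<delta>" for x y
  proof -
    have "\<forall>i\<le>N. cell (U N) ((f ^^ i) y) = cell (U N) ((f ^^ i) x)"
    proof (intro allI impI)
      fix i
      assume "i \<le> N"
      have fx: "(f ^^ i) x \<in> X" and fy: "(f ^^ i) y \<in> X"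
        using \<open>x \<in> X\<close> \<open>y \<in> X\<close> by (simp_all add: funpow_in)
      have close: "d ((f ^^ i) y) ((f ^^ i) x) < \<rho>"
        using \<delta> \<open>x \<in> X\<close> \<open>y \<in> X\<close> \<open>d y x < \<delta>\<close> \<open>i \<le> N\<close> by simp
      show "cell (U N) ((f ^^ i) y) = cell (U N) ((f ^^ i) x)"
      proof (rule ccontr)
        assume "cell (U N) ((f ^^ i) y) \<noteq> cell (U N) ((f ^^ i) x)"
        then have "\<rho> \<le> d ((f ^^ i) y) ((f ^^ i) x)"
          using \<rho> cell_in_partition[OF partition_U[of N] fy] cell_in_partition[OF partition_U[of N] fx]
            mem_cell[OF partition_U[of N] fy] mem_cell[OF partition_U[of N] fx]
          by blast
        with close show False
          by simp
      qed
    qed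
    with \<open>x \<in> X\<close> have "inv_limit_dist (itinerary y) (itinerary x) < inverse (real (Suc N))"
      by (rule inv_limit_dist_itinerary_less[OF \<open>y \<in> X\<close>])
    with N show ?thesis
      by linarith
  qed
  then show "\<exists>\<delta>>0. \<forall>x\<in>X. \<forall>y\<in>X. d y x < \<delta> \<longrightarrow> inv_limit_dist (itinerary y) (itinerary x) < \<epsilon>"
    using \<open>\<delta> > 0\<close> by blast
qed

lemma inv_limit_in_U: "y \<in> inv_limit X f U \<Longrightarrow> y n i \<in> U n"
  unfolding inv_limit_def orbit_space_def by blast

lemma inv_limit_Suc_subset:
  assumes "y \<in> inv_limit X f U"
  shows "y (Suc n) i \<subseteq> y n i"
proof -
  obtain B where B: "B \<in> U n" "y (Suc n) i \<subseteq> B"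
    using refines_U[OF inv_limit_in_U[OF assms]] by blast
  have "y n = bond (U n) (y (Suc n))"
    using assms unfolding inv_limit_def by blast
  then have "y n i = bond (U n) (y (Suc n)) i"
    by (rule fun_cong)
  also have "\<dots> = B"
    using bond_eq[of X d "U n" B "y (Suc n)" i] partition_U B U_nonempty[OF inv_limit_in_U[OF assms]]
    by blast
  finally show ?thesis
    using B(2) by simp
qed

lemma inv_limit_antimono:
  assumes "y \<in> inv_limit X f U" "n \<le> m"
  shows "y m i \<subseteq> y n i"
  using assms(2)
  by (induction m rule: dec_induct) (use inv_limit_Suc_subset[OF assms(1), of _ i] in auto)

lemma inv_limit_realizes_prefix:
  "y \<in> inv_limit X f U \<Longrightarrow> \<exists>z\<in>X. \<forall>j\<le>k. (f ^^ j) z \<in> y n j"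
  unfolding inv_limit_def orbit_space_def by blast

lemma eq_if_mem_all_cells:
  assumes "x \<in> X" "z \<in> X" "\<And>n. z \<in> cell (U n) x"
  shows "z = x"
proof (rule ccontr)
  assume "z \<noteq> x"
  then obtain n where "cell (U n) x \<subseteq> mball x (d x z)"
    using cell_subset_openin[of "mball x (d x z)" x] assms by auto
  then have "z \<in> mball x (d x z)"
    using assms(3) by blast
  then show False
    by simp
qed

end

section \<open>Decoding itineraries\<close>

locale complete_defseq_system = defseq_system +
  assumes nested_cells_meet: "(\<And>n. V n \<in> U n) \<Longrightarrow> (\<And>n. V (Suc n) \<subseteq> V n) \<Longrightarrow> (\<Inter>n. V n) \<noteq> {}"
begin

definition coded_point :: "(nat \<Rightarrow> nat \<Rightarrow> 'a set) \<Rightarrow> 'a" where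
  "coded_point y = (SOME x. x \<in> X \<and> (\<forall>n. x \<in> y n 0))"

lemma
  assumes "y \<in> inv_limit X f U"
  shows coded_point_in: "coded_point y \<in> X"
    and coded_point_mem: "coded_point y \<in> y n 0"
proof -
  have "(\<Inter>n. y n 0) \<noteq> {}"
    using inv_limit_in_U[OF assms] inv_limit_Suc_subset[OF assms] by (rule nested_cells_meet)
  then obtain x where x: "\<forall>n. x \<in> y n 0"
    by blast
  moreover have "x \<in> X"
    using x U_subset[OF inv_limit_in_U[OF assms, of 0 0]] by blast
  ultimately have "x \<in> X \<and> (\<forall>n. x \<in> y n 0)"
    by blast
  then have "coded_point y \<in> X \<and> (\<forall>n. coded_point y \<in> y n 0)"
    unfolding coded_point_def by (rule someI)
  then show "coded_point y \<in> X" "coded_point y \<in> y n 0"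
    by simp_all
qed

lemma coded_point_itinerary:
  assumes "x \<in> X"
  shows "coded_point (itinerary x) = x"
proof (rule eq_if_mem_all_cells[OF assms])
  show "coded_point (itinerary x) \<in> X"
    using assms by (intro coded_point_in itinerary_in_inv_limit)
  show "coded_point (itinerary x) \<in> cell (U n) x" for n
    using coded_point_mem[OF itinerary_in_inv_limit[OF assms], of n] by (simp add: itinerary_def)
qed

lemma itinerary_coded_point:
  assumes y: "y \<in> inv_limit X f U"
  shows "itinerary (coded_point y) = y"
proof -
  define x where "x = coded_point y"
  have x: "x \<in> X" "\<And>n. x \<in> y n 0"
    unfolding x_def using coded_point_in coded_point_mem y by auto
  have "cell (U m) ((f ^^ i) x) = y m i" for m i
  proof -
    \<comment> \<open>Some cell of x is mapped by f^i into V; a point z realising a long enough prefix of y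
      lies in that cell, so V and y m i are cells of U m sharing the point f^i z.\<close>
    define V where "V = cell (U m) ((f ^^ i) x)"
    have V: "V \<in> U m" "(f ^^ i) x \<in> V"
      unfolding V_def using cell_in_partition[OF partition_U] mem_cell[OF partition_U] funpow_in x(1)
      by auto
    define S where "S = {z \<in> topspace mtopology. (f ^^ i) z \<in> V}"
    have "openin mtopology S"
      unfolding S_def using U_openin[OF V(1)]
      by (rule openin_continuous_map_preimage[OF continuous_map_funpow[OF continuous_f]])
    moreover have "x \<in> S"
      unfolding S_def using V x by simp
    ultimately obtain n where n: "cell (U n) x \<subseteq> S"
      using cell_subset_openin by blast
    obtain z where z: "z \<in> X" "\<forall>j\<le>i. (f ^^ j) z \<in> y (max n m) j"
      using inv_limit_realizes_prefix[OF y] by blast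
    have "z \<in> y n 0"
      using z(2) inv_limit_antimono[OF y, of n "max n m" 0] by auto
    also have "y n 0 = cell (U n) x"
      using partition_cell_eq[OF partition_U inv_limit_in_U[OF y] x(2)] by simp
    finally have "(f ^^ i) z \<in> V"
      using n unfolding S_def by blast
    moreover have "(f ^^ i) z \<in> y m i"
      using z(2) inv_limit_antimono[OF y, of m "max n m" i] by auto
    ultimately show ?thesis
      unfolding V_def[symmetric]
      using partition_cell_eq[OF partition_U V(1)] partition_cell_eq[OF partition_U inv_limit_in_U[OF y]]
      by metis
  qed
  then show ?thesis
    unfolding itinerary_def x_def by auto
qed

lemma continuous_map_coded_point:
  "continuous_map (Metric_space.mtopology (inv_limit X f U) inv_limit_dist) mtopology coded_point"
  unfolding Metric_space.metric_continuous_map[OF Metric_space_inv_limit_dist Metric_space_axioms]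
proof (intro conjI ballI allI impI)
  show "coded_point ` inv_limit X f U \<subseteq> X"
    using coded_point_in by auto
next
  fix y and \<epsilon> :: real
  assume y: "y \<in> inv_limit X f U" and "\<epsilon> > 0"
  then have "coded_point y \<in> mball (coded_point y) \<epsilon>"
    using coded_point_in by simp
  then obtain m where m: "cell (U m) (coded_point y) \<subseteq> mball (coded_point y) \<epsilon>"
    using cell_subset_openin[OF openin_mball] by blast
  have "cell (U m) (coded_point y) = y m 0"
    using partition_cell_eq[OF partition_U inv_limit_in_U[OF y] coded_point_mem[OF y]] .
  moreover have "coded_point z \<in> y m 0"
    if "z \<in> inv_limit X f U" "inv_limit_dist y z < inverse (real (Suc m))" for z
    using coded_point_mem[OF that(1), of m] inv_limit_dist_less_imp_head_eq[OF that(2)] by simp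
  ultimately have "d (coded_point y) (coded_point z) < \<epsilon>"
    if "z \<in> inv_limit X f U" "inv_limit_dist y z < inverse (real (Suc m))" for z
    using that m by fastforce
  then show "\<exists>\<delta>>0. \<forall>z. z \<in> inv_limit X f U \<and> inv_limit_dist y z < \<delta>
      \<longrightarrow> d (coded_point y) (coded_point z) < \<epsilon>"
    by (intro exI[of _ "inverse (real (Suc m))"]) auto
qed

lemma homeomorphic_maps_itinerary_coded_point:
  "homeomorphic_maps mtopology (Metric_space.mtopology (inv_limit X f U) inv_limit_dist)
     itinerary coded_point"
  unfolding homeomorphic_maps_def
  using continuous_map_itinerary continuous_map_coded_point coded_point_itinerary itinerary_coded_point
  by (simp add: Metric_space.topspace_mtopology[OF Metric_space_inv_limit_dist])

lemma uniformly_continuous_map_coded_point: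
  assumes "(\<lambda>n. SUP A\<in>U n. set_diam d A) \<longlonglongrightarrow> 0"
  shows "uniformly_continuous_map (metric (inv_limit X f U, inv_limit_dist)) (metric (X, d)) coded_point"
  unfolding uniformly_continuous_map_def Metric_space.mspace_metric[OF Metric_space_inv_limit_dist]
    Metric_space.mdist_metric[OF Metric_space_inv_limit_dist] mspace_metric mdist_metric
proof (intro conjI allI impI)
  show "coded_point \<in> inv_limit X f U \<rightarrow> X"
    using coded_point_in by auto
next
  fix \<epsilon> :: real
  assume "\<epsilon> > 0"
  then obtain m where m: "(SUP A\<in>U m. set_diam d A) < ereal \<epsilon>"
    using order_tendstoD(2)[OF assms, of "ereal \<epsilon>"] eventually_sequentially by auto
  have "d (coded_point y) (coded_point z) < \<epsilon>"
    if "y \<in> inv_limit X f U" "z \<in> inv_limit X f U" "inv_limit_dist y z < inverse (real (Suc m))" for y z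
  proof -
    have "coded_point y \<in> y m 0"
      using that(1) by (rule coded_point_mem)
    moreover have "coded_point z \<in> y m 0"
      using coded_point_mem[OF that(2), of m] inv_limit_dist_less_imp_head_eq[OF that(3)] by simp
    ultimately have "ereal (d (coded_point y) (coded_point z)) \<le> set_diam d (y m 0)"
      unfolding set_diam_def by (intro SUP_upper2[of "(coded_point y, coded_point z)"]) auto
    also have "\<dots> \<le> (SUP A\<in>U m. set_diam d A)"
      using inv_limit_in_U[OF \<open>y \<in> inv_limit X f U\<close>] by (rule SUP_upper)
    also have "\<dots> < ereal \<epsilon>"
      by (rule m)
    finally show ?thesis
      by simp
  qed
  then show "\<exists>\<delta>>0. \<forall>z\<in>inv_limit X f U. \<forall>y\<in>inv_limit X f U. inv_limit_dist y z < \<delta>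
      \<longrightarrow> d (coded_point y) (coded_point z) < \<epsilon>"
    by (intro exI[of _ "inverse (real (Suc m))"]) auto
qed

end

theorem theorem4p13:
  fixes X :: "'a set" and d :: "'a \<Rightarrow> 'a \<Rightarrow> real" and f :: "'a \<Rightarrow> 'a"
    and U :: "nat \<Rightarrow> 'a set set"
  assumes "Metric_space X d"
    and "X \<noteq> {}"
    and "separable_space (Metric_space.mtopology X d)"
    and "continuous_map (Metric_space.mtopology X d) (Metric_space.mtopology X d) f"
    and "complete_defseq X d U"
  shows "Metric_space (inv_limit X f U) inv_limit_dist
    \<and> (\<exists>h. homeomorphic_map (mtopology_of (metric (X, d)))
                (mtopology_of (metric (inv_limit X f U, inv_limit_dist))) h
           \<and> (\<forall>x\<in>X. h (f x) = sigma_star (h x)))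
    \<and> (tame_defseq X d U \<and> uniformly_continuous_map (metric (X, d)) (metric (X, d)) f \<longrightarrow>
         (\<exists>h g. homeomorphic_maps (mtopology_of (metric (X, d)))
                   (mtopology_of (metric (inv_limit X f U, inv_limit_dist))) h g
                \<and> (\<forall>x\<in>X. h (f x) = sigma_star (h x))
                \<and> uniformly_continuous_map (metric (X, d))
                     (metric (inv_limit X f U, inv_limit_dist)) h
                \<and> uniformly_continuous_map (metric (inv_limit X f U, inv_limit_dist))
                     (metric (X, d)) g))"
proof -
  interpret complete_defseq_system X d f U
    using assms(1,4,5)
    by (simp add: complete_defseq_system_def complete_defseq_system_axioms_def defseq_system_def
        defseq_system_axioms_def complete_defseq_def)
  have homeo: "homeomorphic_maps (mtopology_of (metric (X, d)))
      (mtopology_of (metric (inv_limit X f U, inv_limit_dist))) itinerary coded_point"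
    using homeomorphic_maps_itinerary_coded_point
    by (simp add: Metric_space.mtopology_of[OF Metric_space_inv_limit_dist])
  have "uniformly_continuous_map (metric (X, d)) (metric (inv_limit X f U, inv_limit_dist)) itinerary
      \<and> uniformly_continuous_map (metric (inv_limit X f U, inv_limit_dist)) (metric (X, d)) coded_point"
    if "tame_defseq X d U" "uniformly_continuous_map (metric (X, d)) (metric (X, d)) f"
    using that uniformly_continuous_map_itinerary uniformly_continuous_map_coded_point
    unfolding tame_defseq_def by blast
  then show ?thesis
    using Metric_space_inv_limit_dist homeo itinerary_f homeomorphic_map_maps by blast
qed

end
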